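(* Let $(G,\vdash,\dashv)$ be a digroup with distinguished bar-unit $1$, let $E\subset G$ be the set of bar-units and $J\le G$ the group of inverses $\{x^{-1}:x\in G\}$, and let $x\circ y:=x\vdash y\dashv x^{-1}$. Then $G$ is isomorphic to the digroup $(E\times J,\vdash,\dashv)$ whose operations are defined by $$(u,h)\vdash(v,k)=(h\circ v,\ h\vdash k),\qquad (u,h)\dashv(v,k)=(u,\ h\dashv k)$$ for $u,v\in E$, $h,k\in J$.
   Context: A digroup $(G,\vdash,\dashv)$ is a set with two binary operations such that (G1) $(G,\vdash)$ and $(G,\dashv)$ are semigroups; (G2) $x\vdash(y\dashv z)=(x\vdash y)\dashv z$; (G3) $x\dashv(y\vdash z)=x\dashv(y\dashv z)$; (G4) $(x\dashv y)\vdash z=(x\vdash y)\vdash z$; (G5) there is a distinguished $1\in G$ with $1\vdash x=x\dashv 1=x$ for all $x$; (G6) every $x$ has $x^{-1}$ with $x\vdash x^{-1}=x^{-1}\dashv x=1$. A bar-unit is an $e$ with $e\vdash x=x\dashv e=x$ for all $x$. An isomorphism of digroups is a bijection preserving both operations. *)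

theory Defs
  imports Main
begin

definition digroup :: "'a set \<Rightarrow> ('a \<Rightarrow> 'a \<Rightarrow> 'a) \<Rightarrow> ('a \<Rightarrow> 'a \<Rightarrow> 'a) \<Rightarrow> 'a \<Rightarrow> bool" where
  "digroup G l r one \<longleftrightarrow>
     (\<forall>x\<in>G. \<forall>y\<in>G. l x y \<in> G \<and> r x y \<in> G) \<and>
     (\<forall>x\<in>G. \<forall>y\<in>G. \<forall>z\<in>G. l (l x y) z = l x (l y z)) \<and>
     (\<forall>x\<in>G. \<forall>y\<in>G. \<forall>z\<in>G. r (r x y) z = r x (r y z)) \<and>
     (\<forall>x\<in>G. \<forall>y\<in>G. \<forall>z\<in>G. l x (r y z) = r (l x y) z) \<and>
     (\<forall>x\<in>G. \<forall>y\<in>G. \<forall>z\<in>G. r x (l y z) = r x (r y z)) \<and>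
     (\<forall>x\<in>G. \<forall>y\<in>G. \<forall>z\<in>G. l (r x y) z = l (l x y) z) \<and>
     one \<in> G \<and> (\<forall>x\<in>G. l one x = x \<and> r x one = x) \<and>
     (\<forall>x\<in>G. \<exists>y\<in>G. l x y = one \<and> r y x = one)"

definition bar_units :: "'a set \<Rightarrow> ('a \<Rightarrow> 'a \<Rightarrow> 'a) \<Rightarrow> ('a \<Rightarrow> 'a \<Rightarrow> 'a) \<Rightarrow> 'a set" where
  "bar_units G l r = {e \<in> G. \<forall>x\<in>G. l e x = x \<and> r x e = x}"

definition diinv :: "'a set \<Rightarrow> ('a \<Rightarrow> 'a \<Rightarrow> 'a) \<Rightarrow> ('a \<Rightarrow> 'a \<Rightarrow> 'a) \<Rightarrow> 'a \<Rightarrow> 'a \<Rightarrow> 'a" where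
  "diinv G l r one x = (SOME y. y \<in> G \<and> l x y = one \<and> r y x = one)"

definition inverses :: "'a set \<Rightarrow> ('a \<Rightarrow> 'a \<Rightarrow> 'a) \<Rightarrow> ('a \<Rightarrow> 'a \<Rightarrow> 'a) \<Rightarrow> 'a \<Rightarrow> 'a set" where
  "inverses G l r one = (\<lambda>x. diinv G l r one x) ` G"

definition diconj :: "'a set \<Rightarrow> ('a \<Rightarrow> 'a \<Rightarrow> 'a) \<Rightarrow> ('a \<Rightarrow> 'a \<Rightarrow> 'a) \<Rightarrow> 'a \<Rightarrow> 'a \<Rightarrow> 'a \<Rightarrow> 'a" where
  "diconj G l r one x y = r (l x y) (diinv G l r one x)"

definition EJ_left :: "'a set \<Rightarrow> ('a \<Rightarrow> 'a \<Rightarrow> 'a) \<Rightarrow> ('a \<Rightarrow> 'a \<Rightarrow> 'a) \<Rightarrow> 'a \<Rightarrow> 'a \<times> 'a \<Rightarrow> 'a \<times> 'a \<Rightarrow> 'a \<times> 'a" where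
  "EJ_left G l r one p q = (diconj G l r one (snd p) (fst q), l (snd p) (snd q))"

definition EJ_right :: "('a \<Rightarrow> 'a \<Rightarrow> 'a) \<Rightarrow> 'a \<times> 'a \<Rightarrow> 'a \<times> 'a \<Rightarrow> 'a \<times> 'a" where
  "EJ_right r p q = (fst p, r (snd p) (snd q))"

definition digroup_iso ::
  "('a \<Rightarrow> 'b) \<Rightarrow> 'a set \<Rightarrow> ('a \<Rightarrow> 'a \<Rightarrow> 'a) \<Rightarrow> ('a \<Rightarrow> 'a \<Rightarrow> 'a)
     \<Rightarrow> 'b set \<Rightarrow> ('b \<Rightarrow> 'b \<Rightarrow> 'b) \<Rightarrow> ('b \<Rightarrow> 'b \<Rightarrow> 'b) \<Rightarrow> bool" where
  "digroup_iso f G l r H l' r' \<longleftrightarrow> bij_betw f G H \<and>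
     (\<forall>x\<in>G. \<forall>y\<in>G. f (l x y) = l' (f x) (f y) \<and> f (r x y) = r' (f x) (f y))"

end

theory Submission
  imports Defs
begin

text \<open>Right \<turnstile>-inverses are unique; hence x\<inverse>\<inverse> = 1 \<dashv> x, so that J = {z. 1 \<dashv> z = z}, and
x \<dashv> x\<inverse> is a bar-unit. Every x therefore factors uniquely as x = u \<dashv> h with
u = x \<dashv> x\<inverse> \<in> E and h = 1 \<dashv> x \<in> J, i.e. (u, h) \<mapsto> u \<dashv> h is a bijection E \<times> J \<rightarrow> G.
The digroup axioms show that this bijection carries the operations of E \<times> J to those of G
(for \<turnstile> the point is that (h \<turnstile> v)\<inverse> = h\<inverse> when v is a bar-unit), so its inverse is the
required isomorphism.\<close>

lemma digroup_iso_inv_into: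
  assumes bij: "bij_betw g H G"
    and closed: "\<And>p q. p \<in> H \<Longrightarrow> q \<in> H \<Longrightarrow> l' p q \<in> H \<and> r' p q \<in> H"
    and hom: "\<And>p q. p \<in> H \<Longrightarrow> q \<in> H \<Longrightarrow>
                g (l' p q) = l (g p) (g q) \<and> g (r' p q) = r (g p) (g q)"
  shows "digroup_iso (inv_into H g) G l r H l' r'"
  unfolding digroup_iso_def
proof (intro conjI ballI)
  let ?f = "inv_into H g"
  show "bij_betw ?f G H"
    using bij by (rule bij_betw_inv_into)
  fix x y assume "x \<in> G" "y \<in> G"
  then obtain p q where p: "p \<in> H" "x = g p" and q: "q \<in> H" "y = g q"
    using bij by (metis bij_betw_imp_surj_on imageE)
  have f_g: "?f (g s) = s" if "s \<in> H" for s
    using bij that by (rule bij_betw_inv_into_left)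
  show "?f (l x y) = l' (?f x) (?f y)"
    using p q closed hom f_g by metis
  show "?f (r x y) = r' (?f x) (?f y)"
    using p q closed hom f_g by metis
qed

locale digroup_laws =
  fixes G :: "'a set"
    and l :: "'a \<Rightarrow> 'a \<Rightarrow> 'a" (infixl \<open>\<turnstile>\<close> 70)
    and r :: "'a \<Rightarrow> 'a \<Rightarrow> 'a" (infixl \<open>\<dashv>\<close> 70)
    and one :: 'a
  assumes digroup: "digroup G l r one"
begin

lemma left_closed [simp]: "x \<in> G \<Longrightarrow> y \<in> G \<Longrightarrow> x \<turnstile> y \<in> G"
  and right_closed [simp]: "x \<in> G \<Longrightarrow> y \<in> G \<Longrightarrow> x \<dashv> y \<in> G"
  and left_assoc: "x \<in> G \<Longrightarrow> y \<in> G \<Longrightarrow> z \<in> G \<Longrightarrow> (x \<turnstile> y) \<turnstile> z = x \<turnstile> (y \<turnstile> z)"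
  and right_assoc: "x \<in> G \<Longrightarrow> y \<in> G \<Longrightarrow> z \<in> G \<Longrightarrow> (x \<dashv> y) \<dashv> z = x \<dashv> (y \<dashv> z)"
  and left_right_assoc: "x \<in> G \<Longrightarrow> y \<in> G \<Longrightarrow> z \<in> G \<Longrightarrow> x \<turnstile> (y \<dashv> z) = (x \<turnstile> y) \<dashv> z"
  and right_left_eq: "x \<in> G \<Longrightarrow> y \<in> G \<Longrightarrow> z \<in> G \<Longrightarrow> x \<dashv> (y \<turnstile> z) = x \<dashv> (y \<dashv> z)"
  and left_right_eq: "x \<in> G \<Longrightarrow> y \<in> G \<Longrightarrow> z \<in> G \<Longrightarrow> (x \<dashv> y) \<turnstile> z = (x \<turnstile> y) \<turnstile> z"
  and one_closed [simp]: "one \<in> G"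
  and left_unit [simp]: "x \<in> G \<Longrightarrow> one \<turnstile> x = x"
  and right_unit [simp]: "x \<in> G \<Longrightarrow> x \<dashv> one = x"
  and inverse_exists: "x \<in> G \<Longrightarrow> \<exists>y\<in>G. x \<turnstile> y = one \<and> y \<dashv> x = one"
  using digroup unfolding digroup_def by auto

abbreviation dinv :: "'a \<Rightarrow> 'a"
  where "dinv x \<equiv> diinv G l r one x"

lemma dinv_closed [simp]: "x \<in> G \<Longrightarrow> dinv x \<in> G"
  and left_dinv [simp]: "x \<in> G \<Longrightarrow> x \<turnstile> dinv x = one"
  and dinv_right [simp]: "x \<in> G \<Longrightarrow> dinv x \<dashv> x = one"
  using someI_ex[OF inverse_exists[unfolded Bex_def]] unfolding diinv_def by auto

lemma right_inverse_eq:
  assumes "x \<in> G" "y \<in> G" "x \<turnstile> y = one"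
  shows "y = dinv x \<turnstile> one"
proof -
  have "y = (dinv x \<dashv> x) \<turnstile> y" using assms by simp
  also have "\<dots> = dinv x \<turnstile> (x \<turnstile> y)" using assms by (metis left_right_eq left_assoc dinv_closed)
  also have "\<dots> = dinv x \<turnstile> one" using assms by simp
  finally show ?thesis .
qed

lemma dinv_left_one [simp]: "x \<in> G \<Longrightarrow> dinv x \<turnstile> one = dinv x"
  using right_inverse_eq[of x "dinv x"] by simp

lemma dinv_unique: "x \<in> G \<Longrightarrow> y \<in> G \<Longrightarrow> x \<turnstile> y = one \<Longrightarrow> dinv x = y"
  using right_inverse_eq by simp

lemma one_right_dinv [simp]:
  assumes "x \<in> G"
  shows "one \<dashv> dinv x = dinv x"
proof -
  have "dinv x = dinv x \<dashv> (x \<turnstile> dinv x)" using assms by simp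
  also have "\<dots> = (dinv x \<dashv> x) \<dashv> dinv x" using assms by (metis right_left_eq right_assoc dinv_closed)
  also have "\<dots> = one \<dashv> dinv x" using assms by simp
  finally show ?thesis by simp
qed

lemma dinv_dinv: "x \<in> G \<Longrightarrow> dinv (dinv x) = one \<dashv> x"
  by (rule dinv_unique) (simp_all add: left_right_assoc)

abbreviation E :: "'a set"
  where "E \<equiv> bar_units G l r"

abbreviation J :: "'a set"
  where "J \<equiv> inverses G l r one"

lemma bar_unitsD:
  assumes "e \<in> E"
  shows "e \<in> G" and "x \<in> G \<Longrightarrow> e \<turnstile> x = x" and "x \<in> G \<Longrightarrow> x \<dashv> e = x"
  using assms unfolding bar_units_def by auto

lemma right_dinv_bar_unit: "x \<in> G \<Longrightarrow> x \<dashv> dinv x \<in> E"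
  unfolding bar_units_def by (simp add: left_right_eq flip: right_left_eq)

lemma bar_unit_right_left: "e \<in> E \<Longrightarrow> x \<in> G \<Longrightarrow> y \<in> G \<Longrightarrow> (e \<dashv> x) \<turnstile> y = x \<turnstile> y"
  by (simp add: left_right_eq bar_unitsD)

lemma dinv_bar_unit_right: "e \<in> E \<Longrightarrow> x \<in> G \<Longrightarrow> dinv (e \<dashv> x) = dinv x"
  by (rule dinv_unique) (simp_all add: bar_unit_right_left bar_unitsD)

lemma diconj_bar_unit:
  assumes h: "h \<in> G" and v: "v \<in> E"
  shows "diconj G l r one h v \<in> E"
proof -
  have "dinv (h \<turnstile> v) = dinv h"
    using assms by (intro dinv_unique) (simp_all add: left_assoc bar_unitsD)
  then show ?thesis
    using right_dinv_bar_unit[of "h \<turnstile> v"] assms unfolding diconj_def by (simp add: bar_unitsD)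
qed

lemma inverses_eq: "J = {z \<in> G. one \<dashv> z = z}"
proof (intro set_eqI iffI)
  fix z assume "z \<in> J"
  then show "z \<in> {z \<in> G. one \<dashv> z = z}" unfolding inverses_def by auto
next
  fix z assume z: "z \<in> {z \<in> G. one \<dashv> z = z}"
  then have "z = dinv (dinv z)" by (simp add: dinv_dinv)
  then show "z \<in> J" unfolding inverses_def using z by (simp add: image_eqI)
qed

lemma inversesD:
  assumes "h \<in> J"
  shows "h \<in> G" and "one \<dashv> h = h" and "h \<turnstile> one = h"
  using assms unfolding inverses_def by auto

lemma inverses_left_eq_right:
  assumes "h \<in> J" "k \<in> J"
  shows "h \<turnstile> k = h \<dashv> k"
proof -
  have "h \<turnstile> k = h \<turnstile> (one \<dashv> k)" using assms by (simp add: inversesD)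
  also have "\<dots> = (h \<turnstile> one) \<dashv> k" using assms by (simp add: left_right_assoc inversesD(1))
  also have "\<dots> = h \<dashv> k" using assms by (simp add: inversesD)
  finally show ?thesis .
qed

lemma inverses_right_closed: "h \<in> J \<Longrightarrow> k \<in> J \<Longrightarrow> h \<dashv> k \<in> J"
  unfolding inverses_eq by (simp flip: right_assoc)

lemma EJ_closed:
  assumes "p \<in> E \<times> J" "q \<in> E \<times> J"
  shows "EJ_left G l r one p q \<in> E \<times> J" and "EJ_right r p q \<in> E \<times> J"
  using assms diconj_bar_unit inverses_right_closed inverses_left_eq_right
  unfolding EJ_left_def EJ_right_def by (auto simp: inversesD)

lemma right_factorization:
  assumes "x \<in> G"
  shows "(x \<dashv> dinv x) \<dashv> (one \<dashv> x) = x"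
proof -
  have "(x \<dashv> dinv x) \<dashv> (one \<dashv> x) = x \<dashv> (dinv x \<dashv> x)"
    using assms by (metis right_assoc right_unit dinv_closed one_closed right_closed)
  also have "\<dots> = x" using assms by simp
  finally show ?thesis .
qed

lemma right_factorization_unique:
  assumes u: "u \<in> E" and h: "h \<in> J"
  shows "(u \<dashv> h) \<dashv> dinv (u \<dashv> h) = u" and "one \<dashv> (u \<dashv> h) = h"
proof -
  have "(u \<dashv> h) \<dashv> dinv (u \<dashv> h) = u \<dashv> (h \<dashv> dinv h)"
    using assms by (simp add: dinv_bar_unit_right right_assoc bar_unitsD inversesD)
  also have "\<dots> = u"
    using assms by (simp add: right_dinv_bar_unit bar_unitsD inversesD)
  finally show "(u \<dashv> h) \<dashv> dinv (u \<dashv> h) = u" .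
  have "one \<dashv> (u \<dashv> h) = (one \<dashv> u) \<dashv> h"
    using assms by (metis right_assoc one_closed bar_unitsD(1) inversesD(1))
  also have "\<dots> = h"
    using assms by (simp add: bar_unitsD inversesD)
  finally show "one \<dashv> (u \<dashv> h) = h" .
qed

lemma bij_betw_right_mult: "bij_betw (\<lambda>(u, h). u \<dashv> h) (E \<times> J) G"
proof (rule bij_betw_byWitness[where f' = "\<lambda>x. (x \<dashv> dinv x, one \<dashv> x)"])
  have "one \<dashv> x \<in> J" if "x \<in> G" for x
    using that by (simp add: dinv_dinv[symmetric] inverses_def)
  then show "(\<lambda>x. (x \<dashv> dinv x, one \<dashv> x)) ` G \<subseteq> E \<times> J"
    by (auto simp: right_dinv_bar_unit)
qed (auto simp: right_factorization right_factorization_unique bar_unitsD inversesD)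

lemma right_mult_EJ_left:
  assumes "u \<in> E" "h \<in> G" "v \<in> G" "k \<in> J"
  shows "diconj G l r one h v \<dashv> (h \<turnstile> k) = (u \<dashv> h) \<turnstile> (v \<dashv> k)"
proof -
  have "dinv h \<dashv> (h \<turnstile> k) = (dinv h \<dashv> h) \<dashv> k"
    using assms by (metis right_left_eq right_assoc dinv_closed inversesD(1))
  then have k: "dinv h \<dashv> (h \<turnstile> k) = k"
    using assms by (simp add: inversesD)
  have "diconj G l r one h v \<dashv> (h \<turnstile> k) = (h \<turnstile> v) \<dashv> (dinv h \<dashv> (h \<turnstile> k))"
    unfolding diconj_def using assms by (simp add: right_assoc inversesD(1))
  also have "\<dots> = h \<turnstile> (v \<dashv> k)"
    unfolding k using assms by (simp add: left_right_assoc inversesD(1))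
  also have "\<dots> = (u \<dashv> h) \<turnstile> (v \<dashv> k)"
    using assms by (simp add: bar_unit_right_left inversesD(1))
  finally show ?thesis .
qed

lemma right_mult_EJ_right:
  assumes "u \<in> G" "h \<in> G" "v \<in> E" "k \<in> G"
  shows "u \<dashv> (h \<dashv> k) = (u \<dashv> h) \<dashv> (v \<dashv> k)"
proof -
  have "(u \<dashv> h) \<dashv> (v \<dashv> k) = u \<dashv> ((h \<dashv> v) \<dashv> k)"
    using assms by (simp add: right_assoc bar_unitsD(1))
  then show ?thesis
    using assms by (simp add: bar_unitsD)
qed

lemma right_mult_hom:
  assumes "p \<in> E \<times> J" "q \<in> E \<times> J"
  shows "(\<lambda>(u, h). u \<dashv> h) (EJ_left G l r one p q) = (\<lambda>(u, h). u \<dashv> h) p \<turnstile> (\<lambda>(u, h). u \<dashv> h) q"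
    and "(\<lambda>(u, h). u \<dashv> h) (EJ_right r p q) = (\<lambda>(u, h). u \<dashv> h) p \<dashv> (\<lambda>(u, h). u \<dashv> h) q"
proof -
  obtain u h v k where "p = (u, h)" "q = (v, k)" "u \<in> E" "h \<in> J" "v \<in> E" "k \<in> J"
    using assms by blast
  then show "(\<lambda>(u, h). u \<dashv> h) (EJ_left G l r one p q) = (\<lambda>(u, h). u \<dashv> h) p \<turnstile> (\<lambda>(u, h). u \<dashv> h) q"
    and "(\<lambda>(u, h). u \<dashv> h) (EJ_right r p q) = (\<lambda>(u, h). u \<dashv> h) p \<dashv> (\<lambda>(u, h). u \<dashv> h) q"
    unfolding EJ_left_def EJ_right_def
    by (simp_all only: prod.case fst_conv snd_conv)
      (intro right_mult_EJ_left right_mult_EJ_right; simp add: bar_unitsD(1) inversesD(1))+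
qed

end

theorem theorem4p8:
  fixes G :: "'a set" and l r :: "'a \<Rightarrow> 'a \<Rightarrow> 'a" and one :: 'a
  assumes "digroup G l r one"
  shows "\<exists>f. digroup_iso f G l r
             (bar_units G l r \<times> inverses G l r one) (EJ_left G l r one) (EJ_right r)"
proof -
  interpret digroup_laws G l r one
    by (rule digroup_laws.intro) (fact assms)
  have "digroup_iso (inv_into (E \<times> J) (\<lambda>(u, h). r u h)) G l r (E \<times> J) (EJ_left G l r one) (EJ_right r)"
    by (rule digroup_iso_inv_into[OF bij_betw_right_mult]) (simp_all add: EJ_closed right_mult_hom)
  then show ?thesis by blast
qed

end
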